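(* Let $(X,\mathcal{T})$ be an anti-topological space with $|X|>3$. Then $(X,\mathcal{T})$ is not a door anti-topological space.
   Context: Let $X$ be a non-empty set. A family $\mathcal{T}\subseteq P(X)$ is an anti-topology on $X$ (and $(X,\mathcal{T})$ is an anti-topological space) if: (i) $\emptyset\notin\mathcal{T}$ and $X\notin\mathcal{T}$; (ii) for every $n\in\mathbb{N}$ and all $A_1,\dots,A_n\in\mathcal{T}$ that are not all equal, $\bigcap_{i=1}^n A_i\notin\mathcal{T}$; (iii) for every non-empty index set $J$ and all sets $A_i\in\mathcal{T}$ ($i\in J$) that are not all equal, $\bigcup_{i\in J}A_i\notin\mathcal{T}$. Elements of $\mathcal{T}$ are called anti-open; a set is anti-closed if its complement is anti-open. $(X,\mathcal{T})$ is a door anti-topological space if every subset $A\subseteq X$ with $A\neq\emptyset$ and $A\neq X$ is anti-open or anti-closed. *)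

theory Defs
  imports Main
begin

text \<open>The index set in (iii) is taken of type 'a set set; any indexed family can be reindexed
  by its own image, so this loses no generality.\<close>

definition anti_topology :: "'a set \<Rightarrow> 'a set set \<Rightarrow> bool" where
  "anti_topology X T \<longleftrightarrow>
     X \<noteq> {} \<and> T \<subseteq> Pow X \<and>
     {} \<notin> T \<and> X \<notin> T \<and>
     (\<forall>(n::nat) (A::nat \<Rightarrow> 'a set). n \<ge> 1 \<longrightarrow> (\<forall>i<n. A i \<in> T) \<longrightarrow>
        (\<exists>i<n. \<exists>j<n. A i \<noteq> A j) \<longrightarrow> (\<Inter>i<n. A i) \<notin> T) \<and>
     (\<forall>(J::'a set set) (A::'a set \<Rightarrow> 'a set). J \<noteq> {} \<longrightarrow> (\<forall>i\<in>J. A i \<in> T) \<longrightarrow>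
        (\<exists>i\<in>J. \<exists>j\<in>J. A i \<noteq> A j) \<longrightarrow> (\<Union>i\<in>J. A i) \<notin> T)"

definition anti_open :: "'a set set \<Rightarrow> 'a set \<Rightarrow> bool" where
  "anti_open T A \<longleftrightarrow> A \<in> T"

definition anti_closed :: "'a set \<Rightarrow> 'a set set \<Rightarrow> 'a set \<Rightarrow> bool" where
  "anti_closed X T A \<longleftrightarrow> A \<subseteq> X \<and> (X - A) \<in> T"

definition door_anti_topology :: "'a set \<Rightarrow> 'a set set \<Rightarrow> bool" where
  "door_anti_topology X T \<longleftrightarrow> anti_topology X T \<and>
     (\<forall>A. A \<subseteq> X \<longrightarrow> A \<noteq> {} \<longrightarrow> A \<noteq> X \<longrightarrow> anti_open T A \<or> anti_closed X T A)"

end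

theory Submission
  imports Defs
begin

text \<open>The anti-open sets form an antichain, since the intersection of two nested ones is the
  smaller one. In a door space every proper non-empty subset is anti-open or anti-closed, so in a
  chain of three such subsets two carry the same label, and these two (or their complements)
  are nested. A set of more than three points contains such a chain
  \<open>{x} \<subset> {x, y} \<subset> {x, y, z} \<subset> X\<close>.\<close>

lemma anti_open_not_psubset:
  assumes "anti_topology X T" "A \<in> T" "B \<in> T"
  shows "\<not> A \<subset> B"
proof
  assume "A \<subset> B"
  define F :: "nat \<Rightarrow> 'a set" where "F i = (if i = 0 then A else B)" for i
  have "{..<2::nat} = {0, 1}" by auto
  then have "(\<Inter>i<2. F i) = A" "\<forall>i<2. F i \<in> T"
    using assms(2,3) \<open>A \<subset> B\<close> by (auto simp: F_def)
  moreover have "\<exists>i<2. \<exists>j<2. F i \<noteq> F j"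
    using \<open>A \<subset> B\<close> by (intro exI[of _ 0] exI[of _ 1]) (auto simp: F_def)
  moreover have "\<lbrakk>\<forall>i<2. F i \<in> T; \<exists>i<2. \<exists>j<2. F i \<noteq> F j\<rbrakk> \<Longrightarrow> (\<Inter>i<2. F i) \<notin> T"
    using assms(1) unfolding anti_topology_def by simp
  ultimately show False
    using assms(2) by simp
qed

lemma door_anti_topology_no_chain3:
  assumes "door_anti_topology X T" "A \<noteq> {}" "A \<subset> B" "B \<subset> C" "C \<subset> X"
  shows False
proof -
  have "anti_topology X T"
    using assms(1) unfolding door_anti_topology_def by blast
  note not_nested = anti_open_not_psubset[OF this]
  have open_or_closed: "S \<in> T \<or> X - S \<in> T" if "S \<noteq> {}" "S \<subset> X" for S
    using assms(1) that unfolding door_anti_topology_def anti_open_def anti_closed_def by blast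
  have "B \<noteq> {}" "C \<noteq> {}" "A \<subset> X" "B \<subset> X"
    using assms(2-5) by auto
  then have "A \<in> T \<or> X - A \<in> T" "B \<in> T \<or> X - B \<in> T" "C \<in> T \<or> X - C \<in> T"
    using assms(2,5) open_or_closed by simp_all
  moreover have "A \<subset> C" "X - C \<subset> X - B" "X - B \<subset> X - A" "X - C \<subset> X - A"
    using assms(3-5) by auto
  ultimately show False
    using assms(3,4) not_nested[of A B] not_nested[of B C] not_nested[of A C]
      not_nested[of "X - B" "X - A"] not_nested[of "X - C" "X - B"] not_nested[of "X - C" "X - A"]
    by blast
qed

lemma obtain_three_point_proper_subset:
  assumes "infinite X \<or> card X > 3"
  obtains x y z where "{x, y, z} \<subset> X" "x \<noteq> y" "y \<noteq> z" "x \<noteq> z"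
proof -
  obtain S where S: "S \<subseteq> X" "card S = 3"
  proof (cases "finite X")
    case True
    then show ?thesis using assms obtain_subset_with_card_n[of 3 X] that by fastforce
  next
    case False
    then show ?thesis using infinite_arbitrarily_large[OF False, of 3] that by blast
  qed
  moreover have "S \<noteq> X"
    using assms S(2) by auto
  ultimately show ?thesis
    using that card_3_iff[of S] by auto
qed

theorem mainTheorem15:
  fixes X :: "'a set" and T :: "'a set set"
  assumes "anti_topology X T"
    and "infinite X \<or> card X > 3"
  shows "\<not> door_anti_topology X T"
proof \<comment> \<open>the hypothesis \<open>anti_topology X T\<close> is already part of \<open>door_anti_topology X T\<close>\<close>
  assume door: "door_anti_topology X T"
  obtain x y z where "{x, y, z} \<subset> X" "x \<noteq> y" "y \<noteq> z" "x \<noteq> z"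
    using obtain_three_point_proper_subset[OF assms(2)] .
  moreover have "{x} \<subset> {x, y}" "{x, y} \<subset> {x, y, z}"
    using \<open>x \<noteq> y\<close> \<open>y \<noteq> z\<close> \<open>x \<noteq> z\<close> by auto
  ultimately show False
    using door_anti_topology_no_chain3[OF door, of "{x}" "{x, y}" "{x, y, z}"] by simp
qed

end
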